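(* Let $d\geq 2$. If $\rho=\sum_{0\le i\le j<d}p_{ij}\ket{D_{ij}}\bra{D_{ij}}$ is an extremal point of the convex set of separable diagonal symmetric states on $\mathbb{C}^d\otimes\mathbb{C}^d$, then $p_{ij}=2\sqrt{p_{ii}p_{jj}}$ for all $0\le i<j<d$.
   Context: Let $\{\ket{0},\dots,\ket{d-1}\}$ be the computational basis of $\mathbb{C}^d$. Define $\ket{D_{ii}}=\ket{ii}$ and, for $i<j$, $\ket{D_{ij}}=(\ket{ij}+\ket{ji})/\sqrt{2}$. A state $\rho$ on $\mathbb{C}^d\otimes\mathbb{C}^d$ is diagonal symmetric (DS) if $\rho=\sum_{0\le i\le j<d}p_{ij}\ket{D_{ij}}\bra{D_{ij}}$ with $p_{ij}\ge 0$ and $\sum_{i\le j}p_{ij}=1$. A state is separable if it is a convex combination of product states $\rho^A\otimes\rho^B$. An extremal point of a convex set is an element that cannot be written as a nontrivial convex combination of two other elements of the set. *)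

theory Defs
  imports Complex_Main
begin

text \<open>Operators on a finite-dimensional Hilbert space with orthonormal basis indexed by
  a finite set I are represented as kernels 'a \<Rightarrow> 'a \<Rightarrow> complex (matrix entries),
  required to vanish outside I \<times> I.  For C^d we take I = {..<d}; for C^d \<otimes> C^d
  we take I = {..<d} \<times> {..<d}, with basis vector (i,k) standing for |ik>.\<close>

definition density_on :: "'a set \<Rightarrow> ('a \<Rightarrow> 'a \<Rightarrow> complex) \<Rightarrow> bool" where
  "density_on I A \<longleftrightarrow>
     (\<forall>x y. (x \<notin> I \<or> y \<notin> I) \<longrightarrow> A x y = 0) \<and>
     (\<forall>x\<in>I. \<forall>y\<in>I. A x y = cnj (A y x)) \<and>
     (\<forall>v :: 'a \<Rightarrow> complex. 0 \<le> Re (\<Sum>x\<in>I. \<Sum>y\<in>I. cnj (v x) * A x y * v y)) \<and>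
     (\<Sum>x\<in>I. A x x) = 1"

definition tensor_op ::
  "(nat \<Rightarrow> nat \<Rightarrow> complex) \<Rightarrow> (nat \<Rightarrow> nat \<Rightarrow> complex) \<Rightarrow> (nat \<times> nat) \<Rightarrow> (nat \<times> nat) \<Rightarrow> complex" where
  "tensor_op A B = (\<lambda>(i, k) (j, l). A i j * B k l)"

definition separable :: "nat \<Rightarrow> ((nat \<times> nat) \<Rightarrow> (nat \<times> nat) \<Rightarrow> complex) \<Rightarrow> bool" where
  "separable d \<rho> \<longleftrightarrow>
     (\<exists>(n::nat) (q :: nat \<Rightarrow> real) A B.
        (\<forall>m<n. 0 \<le> q m \<and> density_on {..<d} (A m) \<and> density_on {..<d} (B m)) \<and>
        (\<Sum>m<n. q m) = 1 \<and>
        \<rho> = (\<lambda>x y. \<Sum>m<n. complex_of_real (q m) * tensor_op (A m) (B m) x y))"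

definition ket_D :: "nat \<Rightarrow> nat \<Rightarrow> (nat \<times> nat) \<Rightarrow> complex" where
  "ket_D i j = (\<lambda>x. if i = j then (if x = (i, i) then 1 else 0)
                   else (if x = (i, j) \<or> x = (j, i) then complex_of_real (1 / sqrt 2) else 0))"

definition DS_pairs :: "nat \<Rightarrow> (nat \<times> nat) set" where
  "DS_pairs d = {(i, j). i \<le> j \<and> j < d}"

definition DS_op :: "nat \<Rightarrow> (nat \<Rightarrow> nat \<Rightarrow> real) \<Rightarrow> (nat \<times> nat) \<Rightarrow> (nat \<times> nat) \<Rightarrow> complex" where
  "DS_op d p = (\<lambda>x y. \<Sum>(i, j)\<in>DS_pairs d. complex_of_real (p i j) * ket_D i j x * cnj (ket_D i j y))"

definition DS_coeffs :: "nat \<Rightarrow> (nat \<Rightarrow> nat \<Rightarrow> real) \<Rightarrow> bool" where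
  "DS_coeffs d p \<longleftrightarrow> (\<forall>(i, j)\<in>DS_pairs d. 0 \<le> p i j) \<and> (\<Sum>(i, j)\<in>DS_pairs d. p i j) = 1"

definition diag_symmetric :: "nat \<Rightarrow> ((nat \<times> nat) \<Rightarrow> (nat \<times> nat) \<Rightarrow> complex) \<Rightarrow> bool" where
  "diag_symmetric d \<rho> \<longleftrightarrow> (\<exists>p. DS_coeffs d p \<and> \<rho> = DS_op d p)"

definition sep_DS_states :: "nat \<Rightarrow> ((nat \<times> nat) \<Rightarrow> (nat \<times> nat) \<Rightarrow> complex) set" where
  "sep_DS_states d = {\<rho>. separable d \<rho> \<and> diag_symmetric d \<rho>}"

definition extremal_in :: "('a \<Rightarrow> 'a \<Rightarrow> complex) set \<Rightarrow> ('a \<Rightarrow> 'a \<Rightarrow> complex) \<Rightarrow> bool" where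
  "extremal_in S \<rho> \<longleftrightarrow> \<rho> \<in> S \<and>
     (\<forall>a\<in>S. \<forall>b\<in>S. \<forall>t::real. 0 < t \<and> t < 1 \<and>
        \<rho> = (\<lambda>x y. complex_of_real t * a x y + complex_of_real (1 - t) * b x y)
        \<longrightarrow> a = b)"

end

(* Write a separable DS state as sum_m q_m A_m (x) B_m with density operators A_m, B_m, and put
   r_m k = sqrt (A_m kk B_m kk).  The DS entries at (ij,ij), (ji,ji) and (ij,ji) all equal p_ij / 2.
   The 2x2 Cauchy-Schwarz bound |A_ij|^2 <= A_ii A_jj and AM-GM give
     sum q_m Re (A_m ij B_m ji) <= sum q_m r_m i r_m j <= sum q_m (A_m ii B_m jj + A_m jj B_m ii) / 2,
   whose two ends are p_ij / 2; hence p_ii = sum q_m r_m i^2 and p_ij = sum q_m 2 r_m i r_m j.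
   So the state is a mixture of DS states whose coefficients factor as y_i^2 and 2 y_i y_j for a
   probability vector y.  Each of these is itself separable: it is the uniform average over the
   N-th roots of unity w^t of the product states |psi_t><psi_t| (x) |psi_t><psi_t| with
   psi_t k = sqrt (y k) w^(t 3^k), where the exponent 3^k + 3^l determines {k, l}.
   An extremal point therefore equals one of them, and then p_ij = 2 y_i y_j = 2 sqrt (p_ii p_jj). *)

theory Submission
  imports Defs
begin

section \<open>Density operators\<close>

lemma density_on_hermitian:
  assumes "density_on I A" "k \<in> I" "l \<in> I"
  shows "A k l = cnj (A l k)"
  using assms unfolding density_on_def by blast

lemma density_on_psd:
  assumes "density_on I A"
  shows "0 \<le> Re (\<Sum>x\<in>I. \<Sum>y\<in>I. cnj (v x) * A x y * v y)"
  using assms unfolding density_on_def by blast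

lemma quadratic_form_restrict:
  assumes "finite I" "S \<subseteq> I" "\<forall>x\<in>I - S. v x = 0"
  shows "(\<Sum>x\<in>I. \<Sum>y\<in>I. cnj (v x) * A x y * v y) = (\<Sum>x\<in>S. \<Sum>y\<in>S. cnj (v x) * A x y * v y)"
proof -
  have "(\<Sum>y\<in>I. cnj (v x) * A x y * v y) = (\<Sum>y\<in>S. cnj (v x) * A x y * v y)" for x
    using assms by (intro sum.mono_neutral_right) auto
  then show ?thesis
    using assms by (auto intro!: sum.mono_neutral_right)
qed

lemma density_on_diag:
  assumes "density_on I A" "finite I" "k \<in> I"
  shows "Im (A k k) = 0" "0 \<le> Re (A k k)"
proof -
  show "Im (A k k) = 0"
    using density_on_hermitian[OF assms(1,3,3)] by (metis cnj.simps(2) neg_equal_zero)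
  define v where "v = (\<lambda>x. if x = k then (1::complex) else 0)"
  have "(\<Sum>x\<in>I. \<Sum>y\<in>I. cnj (v x) * A x y * v y) = A k k"
    using assms by (subst quadratic_form_restrict[where S = "{k}"]) (auto simp: v_def)
  then show "0 \<le> Re (A k k)"
    using density_on_psd[OF assms(1), of v] by simp
qed

lemma density_on_quadratic_pair:
  assumes "density_on I A" "finite I" "k \<in> I" "l \<in> I" "k \<noteq> l"
  shows "0 \<le> Re (cnj \<alpha> * A k k * \<alpha> + cnj \<alpha> * A k l * \<beta> + cnj \<beta> * A l k * \<alpha> + cnj \<beta> * A l l * \<beta>)"
proof -
  define v where "v = (\<lambda>x. if x = k then \<alpha> else if x = l then \<beta> else 0)"
  have "(\<Sum>x\<in>I. \<Sum>y\<in>I. cnj (v x) * A x y * v y) =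
        cnj \<alpha> * A k k * \<alpha> + cnj \<alpha> * A k l * \<beta> + cnj \<beta> * A l k * \<alpha> + cnj \<beta> * A l l * \<beta>"
    using assms by (subst quadratic_form_restrict[where S = "{k, l}"]) (auto simp: v_def)
  then show ?thesis
    using density_on_psd[OF assms(1), of v] by simp
qed

lemma density_on_offdiag_bound:
  assumes "density_on I A" "finite I" "k \<in> I" "l \<in> I"
  shows "(cmod (A k l))\<^sup>2 \<le> Re (A k k) * Re (A l l)"
proof (cases "k = l")
  case True
  then show ?thesis
    using density_on_diag[OF assms(1-3)] by (simp add: cmod_def power2_eq_square)
next
  case False
  define a b c m where "a = Re (A k k)" and "b = Re (A l l)" and "c = A k l" and "m = (cmod c)\<^sup>2"
  have Akk: "A k k = of_real a" and All: "A l l = of_real b"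
    using density_on_diag(1)[OF assms(1,2)] assms(3,4) unfolding a_def b_def
    by (simp_all add: complex_eq_iff)
  have Alk: "A l k = cnj c"
    unfolding c_def using density_on_hermitian[OF assms(1,4,3)] by simp
  have "a \<ge> 0" "b \<ge> 0" "m \<ge> 0"
    using density_on_diag(2)[OF assms(1,2)] assms(3,4) by (simp_all add: a_def b_def m_def)
  \<comment> \<open>the quadratic form at the vector \<open>x e\<^sub>k - y c\<^sup>* e\<^sub>l\<close>\<close>
  have quad: "0 \<le> a * x\<^sup>2 - 2 * x * y * m + b * y\<^sup>2 * m" for x y :: real
  proof -
    have "cnj (of_real x) * A k k * of_real x + cnj (of_real x) * A k l * (- cnj c * of_real y)
        + cnj (- cnj c * of_real y) * A l k * of_real x + cnj (- cnj c * of_real y) * A l l * (- cnj c * of_real y)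
        = of_real (a * x\<^sup>2) - 2 * of_real x * of_real y * (c * cnj c) + of_real b * of_real (y\<^sup>2) * (c * cnj c)"
      unfolding Akk All Alk c_def[symmetric] by (simp add: algebra_simps power2_eq_square)
    also have "\<dots> = of_real (a * x\<^sup>2 - 2 * x * y * m + b * y\<^sup>2 * m)"
      unfolding m_def complex_norm_square[symmetric] by simp
    finally show ?thesis
      using density_on_quadratic_pair[OF assms False] by (metis Re_complex_of_real)
  qed
  have "m \<le> a * b"
  proof (cases "b = 0")
    case False
    have "0 \<le> b * (a * b - m)"
      using quad[of b 1] by (simp add: algebra_simps power2_eq_square)
    then show ?thesis using False \<open>b \<ge> 0\<close> by (simp add: zero_le_mult_iff)
  next
    case True
    show ?thesis
    proof (rule ccontr)
      assume "\<not> m \<le> a * b"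
      then have "m > 0" using True by simp
      then show False using quad[of 1 "(a + 1) / m"] True \<open>a \<ge> 0\<close> by simp
    qed
  qed
  then show ?thesis unfolding m_def c_def a_def b_def .
qed

lemma density_on_product_offdiag_bound:
  assumes "density_on I A" "density_on I B" "finite I" "k \<in> I" "l \<in> I"
  shows "Re (A k l * B l k) \<le> sqrt (Re (A k k) * Re (B k k)) * sqrt (Re (A l l) * Re (B l l))"
proof -
  have "Re (A k l * B l k) \<le> cmod (A k l) * cmod (B l k)"
    using complex_Re_le_cmod[of "A k l * B l k"] by (simp add: norm_mult)
  also have "\<dots> \<le> sqrt (Re (A k k) * Re (A l l)) * sqrt (Re (B l l) * Re (B k k))"
    using assms density_on_diag(2)[OF assms(1,3)]
    by (intro mult_mono real_le_rsqrt density_on_offdiag_bound) auto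
  also have "\<dots> = sqrt (Re (A k k) * Re (B k k)) * sqrt (Re (A l l) * Re (B l l))"
    by (simp add: real_sqrt_mult[symmetric] ac_simps del: real_sqrt_mult)
  finally show ?thesis .
qed

section \<open>Diagonal symmetric operators\<close>

lemma finite_DS_pairs: "finite (DS_pairs d)"
  by (rule finite_subset[of _ "{..<d} \<times> {..<d}"]) (auto simp: DS_pairs_def)

lemma ket_D_eq:
  assumes "i \<le> j"
  shows "ket_D i j (k, l) =
    (if (i, j) = (min k l, max k l) then (if k = l then 1 else of_real (1 / sqrt 2)) else 0)"
proof (cases "i = j")
  case True
  then show ?thesis by (auto simp: ket_D_def min_def max_def)
next
  case False
  then have "((k, l) = (i, j) \<or> (k, l) = (j, i)) \<longleftrightarrow> (i, j) = (min k l, max k l)"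
    using assms by (auto simp: min_def max_def)
  moreover have "(i, j) = (min k l, max k l) \<Longrightarrow> k \<noteq> l"
    using False by auto
  ultimately show ?thesis
    using False unfolding ket_D_def by (simp only: if_False) presburger
qed

lemma min_max_eq_iff_doubleton_eq:
  fixes k l r s :: "'a :: linorder"
  shows "(min k l, max k l) = (min r s, max r s) \<longleftrightarrow> {k, l} = {r, s}"
  by (auto simp: doubleton_eq_iff min_def max_def)

lemma DS_op_entry:
  "DS_op d p (k, l) (r, s) =
    (if k < d \<and> l < d \<and> {k, l} = {r, s}
     then of_real (if k = l then p k k else p (min k l) (max k l) / 2) else 0)"
proof -
  define c where "c = (if k = l then 1 else complex_of_real (1 / sqrt 2))"
  have ket_kl: "ket_D i j (k, l) = (if (i, j) = (min k l, max k l) then c else 0)" if "i \<le> j" for i j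
    unfolding c_def using ket_D_eq[OF that] .
  have ket_rs: "ket_D (min k l) (max k l) (r, s) = (if {k, l} = {r, s} then c else 0)"
  proof -
    have "{k, l} = {r, s} \<Longrightarrow> (r = s) = (k = l)"
      by (auto simp: doubleton_eq_iff)
    moreover have "ket_D (min k l) (max k l) (r, s) = (if {k, l} = {r, s}
        then (if r = s then 1 else of_real (1 / sqrt 2)) else 0)"
      using ket_D_eq[of "min k l" "max k l" r s] unfolding min_max_eq_iff_doubleton_eq by simp
    ultimately show ?thesis
      unfolding c_def by auto
  qed
  have "DS_op d p (k, l) (r, s) = (\<Sum>ij\<in>DS_pairs d. if ij = (min k l, max k l)
      then of_real (p (min k l) (max k l)) * c * cnj (ket_D (min k l) (max k l) (r, s)) else 0)"
    unfolding DS_op_def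
  proof (intro sum.cong refl, clarify)
    fix i j assume "(i, j) \<in> DS_pairs d"
    then have "i \<le> j" by (simp add: DS_pairs_def)
    then show "of_real (p i j) * ket_D i j (k, l) * cnj (ket_D i j (r, s)) =
      (if (i, j) = (min k l, max k l)
       then of_real (p (min k l) (max k l)) * c * cnj (ket_D (min k l) (max k l) (r, s)) else 0)"
      by (cases "(i, j) = (min k l, max k l)") (simp_all only: ket_kl if_True if_False mult_zero_right mult_zero_left, simp)
  qed
  also have "\<dots> = (if (min k l, max k l) \<in> DS_pairs d
      then of_real (p (min k l) (max k l)) * c * cnj (ket_D (min k l) (max k l) (r, s)) else 0)"
    by (rule sum.delta[OF finite_DS_pairs])
  also have "\<dots> = (if k < d \<and> l < d \<and> {k, l} = {r, s}
     then of_real (if k = l then p k k else p (min k l) (max k l) / 2) else 0)"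
  proof -
    have "c * cnj c = (if k = l then 1 else 1 / 2)"
      by (simp add: c_def flip: of_real_mult)
    moreover have "(min k l, max k l) \<in> DS_pairs d \<longleftrightarrow> k < d \<and> l < d"
      by (auto simp: DS_pairs_def)
    ultimately show ?thesis
      unfolding ket_rs by (auto simp: mult.assoc)
  qed
  finally show ?thesis .
qed

lemma DS_op_cong:
  assumes "\<And>i j. (i, j) \<in> DS_pairs d \<Longrightarrow> p i j = p' i j"
  shows "DS_op d p = DS_op d p'"
  unfolding DS_op_def using assms by (intro ext sum.cong) auto

lemma DS_op_eq_imp_coeffs_eq:
  assumes "DS_op d p = DS_op d p'" "(i, j) \<in> DS_pairs d"
  shows "p i j = p' i j"
proof -
  have "DS_op d p (i, j) (i, j) = DS_op d p' (i, j) (i, j)"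
    using assms(1) by simp
  then show ?thesis
    using assms(2) by (auto simp: DS_op_entry DS_pairs_def split: if_splits)
qed

lemma DS_op_sum:
  assumes "finite M"
  shows "DS_op d (\<lambda>i j. \<Sum>m\<in>M. w m * c m i j) = (\<lambda>x y. \<Sum>m\<in>M. of_real (w m) * DS_op d (c m) x y)"
  unfolding DS_op_def
  by (auto simp: sum_distrib_left sum_distrib_right case_prod_beta mult.assoc intro!: ext sum.swap)

lemma DS_op_convex_comb:
  "DS_op d (\<lambda>i j. t * p i j + u * p' i j) =
   (\<lambda>x y. of_real t * DS_op d p x y + of_real u * DS_op d p' x y)"
  unfolding DS_op_def
  by (auto simp: sum.distrib sum_distrib_left case_prod_beta algebra_simps intro!: ext)

definition DS_product_coeffs :: "(nat \<Rightarrow> real) \<Rightarrow> nat \<Rightarrow> nat \<Rightarrow> real" where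
  "DS_product_coeffs y i j = (if i = j then (y i)\<^sup>2 else 2 * y i * y j)"

lemma DS_product_coeffs_scale:
  "DS_product_coeffs (\<lambda>k. c * y k) i j = c\<^sup>2 * DS_product_coeffs y i j"
  by (simp add: DS_product_coeffs_def power2_eq_square)

lemma DS_product_coeffs_offdiag:
  assumes "0 \<le> y i" "0 \<le> y j" "i \<noteq> j"
  shows "DS_product_coeffs y i j = 2 * sqrt (DS_product_coeffs y i i * DS_product_coeffs y j j)"
  using assms by (simp add: DS_product_coeffs_def real_sqrt_mult)

lemma sum_DS_product_coeffs: "(\<Sum>(i, j)\<in>DS_pairs d. DS_product_coeffs y i j) = (\<Sum>k<d. y k)\<^sup>2"
proof (induction d)
  case 0
  then show ?case by (simp add: DS_pairs_def)
next
  case (Suc d)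
  have "DS_pairs (Suc d) = DS_pairs d \<union> (\<lambda>i. (i, d)) ` {..d}"
    by (auto simp: DS_pairs_def)
  moreover have "DS_pairs d \<inter> (\<lambda>i. (i, d)) ` {..d} = {}"
    by (auto simp: DS_pairs_def)
  ultimately have "(\<Sum>(i, j)\<in>DS_pairs (Suc d). DS_product_coeffs y i j) =
      (\<Sum>(i, j)\<in>DS_pairs d. DS_product_coeffs y i j) + (\<Sum>i\<le>d. DS_product_coeffs y i d)"
    by (simp add: sum.union_disjoint finite_DS_pairs sum.reindex inj_on_def)
  also have "(\<Sum>i\<le>d. DS_product_coeffs y i d) = 2 * y d * (\<Sum>i<d. y i) + (y d)\<^sup>2"
    by (simp add: lessThan_Suc_atMost[symmetric] DS_product_coeffs_def sum_distrib_left algebra_simps)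
  finally show ?case
    using Suc.IH by (simp add: power2_eq_square algebra_simps)
qed

lemma DS_op_product_entry:
  "DS_op d (DS_product_coeffs y) (k, l) (r, s) =
    (if k < d \<and> l < d \<and> {k, l} = {r, s} then of_real (y k * y l) else 0)"
proof -
  have "(if k = l then DS_product_coeffs y k k else DS_product_coeffs y (min k l) (max k l) / 2) = y k * y l"
    by (auto simp: DS_product_coeffs_def min_def max_def power2_eq_square)
  then show ?thesis
    unfolding DS_op_entry by simp
qed

lemma DS_coeffs_product:
  assumes "\<And>k. k < d \<Longrightarrow> 0 \<le> y k" "(\<Sum>k<d. y k) = 1"
  shows "DS_coeffs d (DS_product_coeffs y)"
  using assms sum_DS_product_coeffs[where d = d and y = y]
  by (auto simp: DS_coeffs_def DS_pairs_def DS_product_coeffs_def)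

section \<open>Separability of product coefficient families\<close>

lemma roots_of_unity_orthogonal:
  fixes N a b :: nat
  assumes "N > 0" "a < N" "b < N"
  defines "z \<equiv> cis (2 * pi / real N)"
  shows "(\<Sum>t<N. z ^ (t * a) * cnj (z ^ (t * b))) = (if a = b then of_nat N else 0)"
proof -
  have z_power: "z ^ m = cis (2 * pi * real m / real N)" for m
    unfolding z_def DeMoivre by (simp add: field_simps)
  have cnj_z_power: "cnj (z ^ m) = inverse (z ^ m)" for m
    unfolding z_power by (simp add: cis_cnj cis_inverse)
  define w where "w = z ^ a * inverse (z ^ b)"
  have "z ^ (t * a) * cnj (z ^ (t * b)) = w ^ t" for t
    unfolding w_def cnj_z_power by (simp add: power_mult mult.commute[of t] power_mult_distrib power_inverse)
  then have sum_eq: "(\<Sum>t<N. z ^ (t * a) * cnj (z ^ (t * b))) = (\<Sum>t<N. w ^ t)"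
    by simp
  show ?thesis
  proof (cases "a = b")
    case True
    then show ?thesis
      unfolding sum_eq w_def by (simp add: z_def)
  next
    case False
    have "inj_on (\<lambda>k. cis (2 * pi * real k / real N)) {..<N}"
      using bij_betw_roots_unity[OF assms(1)] by (simp add: bij_betw_def)
    then have "z ^ a \<noteq> z ^ b"
      unfolding z_power using assms False by (auto dest: inj_onD)
    then have "w \<noteq> 1"
      unfolding w_def by (simp add: z_def field_simps)
    moreover have "w ^ N = 1"
    proof -
      have "(z ^ m) ^ N = cis (2 * pi) ^ m" for m
        unfolding z_def DeMoivre using assms(1) by (simp add: field_simps flip: power_mult)
      then have "(z ^ m) ^ N = 1" for m
        by simp
      then show ?thesis
        unfolding w_def by (simp add: power_mult_distrib power_inverse)
    qed
    ultimately show ?thesis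
      unfolding sum_eq using False geometric_sum[of w N] by simp
  qed
qed

lemma three_not_dvd_Suc_three_power: "\<not> (3::nat) dvd 1 + 3 ^ j"
proof (cases j)
  case 0
  then show ?thesis using nat_dvd_not_less[of 2 3] by (simp add: numeral_eq_Suc)
next
  case (Suc i)
  then have "(3::nat) dvd 3 ^ j" by simp
  then show ?thesis using dvd_add_right_iff[of "3::nat" "3 ^ j" 1] by (simp add: add.commute)
qed

lemma three_power_sum_ordered_eq:
  fixes k l r s :: nat
  assumes "k \<le> l" "r \<le> s" "3 ^ k + 3 ^ l = (3::nat) ^ r + 3 ^ s"
  shows "k = r \<and> l = s"
proof -
  have not_less: "\<not> k' < r'"
    if "k' \<le> l'" "r' \<le> s'" "3 ^ k' + 3 ^ l' = (3::nat) ^ r' + 3 ^ s'" for k' l' r' s' :: nat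
  proof
    assume "k' < r'"
    then have "(3::nat) ^ (k' + 1) dvd 3 ^ r' + 3 ^ s'"
      using that(2) by (intro dvd_add le_imp_power_dvd) auto
    moreover have "(3::nat) ^ k' + 3 ^ l' = 3 ^ k' * (1 + 3 ^ (l' - k'))"
      using that(1) by (simp add: algebra_simps flip: power_add)
    ultimately have "3 ^ k' * 3 dvd (3::nat) ^ k' * (1 + 3 ^ (l' - k'))"
      using that(3) by (simp add: mult.commute)
    then show False
      using nat_mult_dvd_cancel_disj[of "3 ^ k'" 3 "1 + 3 ^ (l' - k')"] three_not_dvd_Suc_three_power
      by simp
  qed
  have "k = r"
    using not_less[of k l r s] not_less[of r s k l] assms by simp
  then show ?thesis
    using assms(3) by simp
qed

lemma three_power_sum_eq_iff:
  fixes k l r s :: nat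
  shows "3 ^ k + 3 ^ l = (3::nat) ^ r + 3 ^ s \<longleftrightarrow> {k, l} = {r, s}"
proof
  assume "3 ^ k + 3 ^ l = (3::nat) ^ r + 3 ^ s"
  then have "3 ^ min k l + 3 ^ max k l = (3::nat) ^ min r s + 3 ^ max r s"
    by (simp add: min_def max_def add.commute)
  then have "(min k l, max k l) = (min r s, max r s)"
    using three_power_sum_ordered_eq[of "min k l" "max k l" "min r s" "max r s"] by simp
  then show "{k, l} = {r, s}"
    by (simp only: min_max_eq_iff_doubleton_eq)
qed (auto simp: doubleton_eq_iff)

definition outer_op :: "nat \<Rightarrow> (nat \<Rightarrow> complex) \<Rightarrow> nat \<Rightarrow> nat \<Rightarrow> complex" where
  "outer_op d f = (\<lambda>k r. if k < d \<and> r < d then f k * cnj (f r) else 0)"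

lemma density_on_outer_op:
  assumes "(\<Sum>k<d. (cmod (f k))\<^sup>2) = 1"
  shows "density_on {..<d} (outer_op d f)"
  unfolding density_on_def
proof (intro conjI allI ballI impI)
  fix x y assume "x \<notin> {..<d} \<or> y \<notin> {..<d}"
  then show "outer_op d f x y = 0" by (auto simp: outer_op_def)
next
  fix x y assume "x \<in> {..<d}" "y \<in> {..<d}"
  then show "outer_op d f x y = cnj (outer_op d f y x)" by (simp add: outer_op_def)
next
  fix v :: "nat \<Rightarrow> complex"
  define S where "S = (\<Sum>x<d. cnj (v x) * f x)"
  have "(\<Sum>x<d. \<Sum>y<d. cnj (v x) * outer_op d f x y * v y) = S * cnj S"
    unfolding S_def cnj_sum sum_product by (intro sum.cong refl) (simp add: outer_op_def algebra_simps)
  also have "\<dots> = of_real ((cmod S)\<^sup>2)" by (rule complex_norm_square[symmetric])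
  finally show "0 \<le> Re (\<Sum>x\<in>{..<d}. \<Sum>y\<in>{..<d}. cnj (v x) * outer_op d f x y * v y)" by simp
next
  have "(\<Sum>x<d. outer_op d f x x) = (\<Sum>x<d. of_real ((cmod (f x))\<^sup>2))"
    by (intro sum.cong refl) (simp add: outer_op_def complex_norm_square[symmetric] del: of_real_power)
  also have "\<dots> = 1"
    using assms by (simp only: of_real_sum[symmetric] of_real_1)
  finally show "(\<Sum>x\<in>{..<d}. outer_op d f x x) = 1" .
qed

definition phase_vector :: "nat \<Rightarrow> (nat \<Rightarrow> real) \<Rightarrow> nat \<Rightarrow> nat \<Rightarrow> complex" where
  "phase_vector N y t k = of_real (sqrt (y k)) * cis (2 * pi / real N) ^ (t * 3 ^ k)"

lemma norm_phase_vector: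
  assumes "0 \<le> y k"
  shows "(cmod (phase_vector N y t k))\<^sup>2 = y k"
  using assms by (simp add: phase_vector_def norm_mult norm_power)

lemma DS_product_phase_average:
  fixes y :: "nat \<Rightarrow> real"
  assumes "\<And>k. k < d \<Longrightarrow> 0 \<le> y k"
  defines "N \<equiv> 2 * 3 ^ d"
  shows "DS_op d (DS_product_coeffs y) (k, l) (r, s) =
    (\<Sum>t<N. of_real (1 / real N) *
       tensor_op (outer_op d (phase_vector N y t)) (outer_op d (phase_vector N y t)) (k, l) (r, s))"
proof (cases "k < d \<and> l < d \<and> r < d \<and> s < d")
  case False
  then show ?thesis
    by (auto simp: DS_op_product_entry tensor_op_def outer_op_def doubleton_eq_iff)
next
  case True
  define z where "z = cis (2 * pi / real N)"
  define a b where "a = (3::nat) ^ k + 3 ^ l" and "b = (3::nat) ^ r + 3 ^ s"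
  define c where "c = sqrt (y k) * sqrt (y l) * sqrt (y r) * sqrt (y s)"
  have "N > 0" unfolding N_def by simp
  have pow_lt: "(3::nat) ^ i < 3 ^ d" if "i < d" for i
    using that by simp
  have "a < N" "b < N"
    unfolding a_def b_def N_def using True pow_lt[of k] pow_lt[of l] pow_lt[of r] pow_lt[of s]
    by linarith+
  have "tensor_op (outer_op d (phase_vector N y t)) (outer_op d (phase_vector N y t)) (k, l) (r, s)
      = of_real c * (z ^ (t * a) * cnj (z ^ (t * b)))" for t
    using True unfolding tensor_op_def outer_op_def phase_vector_def z_def[symmetric] a_def b_def c_def
    by (simp add: algebra_simps power_add)
  then have "(\<Sum>t<N. of_real (1 / real N) *
       tensor_op (outer_op d (phase_vector N y t)) (outer_op d (phase_vector N y t)) (k, l) (r, s))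
      = of_real (c / real N) * (\<Sum>t<N. z ^ (t * a) * cnj (z ^ (t * b)))"
    by (simp add: sum_distrib_left mult.assoc)
  also have "\<dots> = (if {k, l} = {r, s} then of_real c else 0)"
    unfolding z_def roots_of_unity_orthogonal[OF \<open>N > 0\<close> \<open>a < N\<close> \<open>b < N\<close>]
    using \<open>N > 0\<close> by (simp add: a_def b_def three_power_sum_eq_iff)
  also have "\<dots> = DS_op d (DS_product_coeffs y) (k, l) (r, s)"
  proof -
    have "c = y k * y l" if "{k, l} = {r, s}"
    proof -
      have "k = r \<and> l = s \<or> k = s \<and> l = r"
        using that by (simp only: doubleton_eq_iff)
      moreover have "0 \<le> y k" "0 \<le> y l"
        using True assms by simp_all
      ultimately show ?thesis
        unfolding c_def by (elim disjE conjE) (simp_all add: mult_ac)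
    qed
    then show ?thesis
      using True by (simp add: DS_op_product_entry)
  qed
  finally show ?thesis ..
qed

lemma separable_DS_product:
  assumes "\<And>k. k < d \<Longrightarrow> 0 \<le> y k" "(\<Sum>k<d. y k) = 1"
  shows "separable d (DS_op d (DS_product_coeffs y))"
proof -
  define N :: nat where "N = 2 * 3 ^ d"
  define A where "A = (\<lambda>m. outer_op d (phase_vector N y m))"
  have "\<forall>m<N. 0 \<le> 1 / real N \<and> density_on {..<d} (A m) \<and> density_on {..<d} (A m)"
  proof (intro allI impI conjI)
    fix m
    have "(\<Sum>k<d. (cmod (phase_vector N y m k))\<^sup>2) = 1"
      using assms by (simp add: norm_phase_vector)
    then show "density_on {..<d} (A m)"
      unfolding A_def by (rule density_on_outer_op)
    then show "density_on {..<d} (A m)" .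
  qed simp
  moreover have "(\<Sum>m<N. 1 / real N) = 1"
    unfolding N_def by simp
  moreover have "DS_op d (DS_product_coeffs y) =
      (\<lambda>x x'. \<Sum>m<N. of_real (1 / real N) * tensor_op (A m) (A m) x x')"
  proof (intro ext)
    fix x x' :: "nat \<times> nat"
    show "DS_op d (DS_product_coeffs y) x x' =
        (\<Sum>m<N. of_real (1 / real N) * tensor_op (A m) (A m) x x')"
      unfolding N_def A_def
      by (cases x, cases x') (simp only: DS_product_phase_average[OF assms(1)])
  qed
  ultimately show ?thesis
    unfolding separable_def
    by (intro exI[where x = N] exI[where x = "\<lambda>_. 1 / real N"] exI[where x = A]) simp
qed

lemma DS_product_in_sep_DS_states:
  assumes "\<And>k. k < d \<Longrightarrow> 0 \<le> y k" "(\<Sum>k<d. y k) = 1"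
  shows "DS_op d (DS_product_coeffs y) \<in> sep_DS_states d"
  unfolding sep_DS_states_def diag_symmetric_def
  using separable_DS_product[OF assms] DS_coeffs_product[OF assms] by auto

section \<open>Convexity and extremal points\<close>

definition op_convex :: "('a \<Rightarrow> 'a \<Rightarrow> complex) set \<Rightarrow> bool" where
  "op_convex S \<longleftrightarrow> (\<forall>a\<in>S. \<forall>b\<in>S. \<forall>t::real. 0 \<le> t \<and> t \<le> 1 \<longrightarrow>
     (\<lambda>x y. of_real t * a x y + of_real (1 - t) * b x y) \<in> S)"

lemma sum_lessThan_add:
  fixes n1 n2 :: nat
  shows "(\<Sum>m<n1 + n2. f m) = (\<Sum>m<n1. f m) + (\<Sum>m<n2. f (n1 + m))"
  by (induction n2) (simp_all add: add.assoc)

lemma separable_convex_comb: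
  assumes "separable d a" "separable d b" "0 \<le> t" "t \<le> 1"
  shows "separable d (\<lambda>x y. of_real t * a x y + of_real (1 - t) * b x y)"
proof -
  obtain n1 :: nat and q1 A1 B1 where
    h1: "\<forall>m<n1. 0 \<le> q1 m \<and> density_on {..<d} (A1 m) \<and> density_on {..<d} (B1 m)"
      "(\<Sum>m<n1. q1 m) = 1" "a = (\<lambda>x y. \<Sum>m<n1. of_real (q1 m) * tensor_op (A1 m) (B1 m) x y)"
    using assms(1) unfolding separable_def by blast
  obtain n2 :: nat and q2 A2 B2 where
    h2: "\<forall>m<n2. 0 \<le> q2 m \<and> density_on {..<d} (A2 m) \<and> density_on {..<d} (B2 m)"
      "(\<Sum>m<n2. q2 m) = 1" "b = (\<lambda>x y. \<Sum>m<n2. of_real (q2 m) * tensor_op (A2 m) (B2 m) x y)"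
    using assms(2) unfolding separable_def by blast
  define q where "q = (\<lambda>m. if m < n1 then t * q1 m else (1 - t) * q2 (m - n1))"
  define A where "A = (\<lambda>m. if m < n1 then A1 m else A2 (m - n1))"
  define B where "B = (\<lambda>m. if m < n1 then B1 m else B2 (m - n1))"
  have "\<forall>m<n1 + n2. 0 \<le> q m \<and> density_on {..<d} (A m) \<and> density_on {..<d} (B m)"
  proof (intro allI impI)
    fix m assume "m < n1 + n2"
    then show "0 \<le> q m \<and> density_on {..<d} (A m) \<and> density_on {..<d} (B m)"
      using h1(1) h2(1)[rule_format, of "m - n1"] assms(3,4) unfolding q_def A_def B_def by auto
  qed
  moreover have "(\<Sum>m<n1 + n2. q m) = 1"
    unfolding sum_lessThan_add q_def using h1(2) h2(2) by (simp add: sum_distrib_left[symmetric])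
  moreover have "(\<lambda>x y. of_real t * a x y + of_real (1 - t) * b x y) =
      (\<lambda>x y. \<Sum>m<n1 + n2. of_real (q m) * tensor_op (A m) (B m) x y)"
    unfolding sum_lessThan_add h1(3) h2(3) q_def A_def B_def
    by (simp add: sum_distrib_left mult.assoc)
  ultimately show ?thesis
    unfolding separable_def by (intro exI[where x = "n1 + n2"] exI[where x = q] exI[where x = A] exI[where x = B]) simp
qed

lemma diag_symmetric_convex_comb:
  assumes "diag_symmetric d a" "diag_symmetric d b" "0 \<le> t" "t \<le> 1"
  shows "diag_symmetric d (\<lambda>x y. of_real t * a x y + of_real (1 - t) * b x y)"
proof -
  obtain p1 p2 where p: "DS_coeffs d p1" "a = DS_op d p1" "DS_coeffs d p2" "b = DS_op d p2"
    using assms(1,2) unfolding diag_symmetric_def by blast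
  define p where "p = (\<lambda>i j. t * p1 i j + (1 - t) * p2 i j)"
  have "\<forall>(i, j)\<in>DS_pairs d. 0 \<le> p i j"
  proof clarify
    fix i j assume "(i, j) \<in> DS_pairs d"
    then have "0 \<le> p1 i j" "0 \<le> p2 i j"
      using p(1,3) unfolding DS_coeffs_def by auto
    then show "0 \<le> p i j"
      unfolding p_def using assms(3,4) by simp
  qed
  moreover have "(\<Sum>(i, j)\<in>DS_pairs d. p i j) =
      t * (\<Sum>(i, j)\<in>DS_pairs d. p1 i j) + (1 - t) * (\<Sum>(i, j)\<in>DS_pairs d. p2 i j)"
    unfolding p_def by (simp add: sum.distrib sum_distrib_left case_prod_beta)
  ultimately have "DS_coeffs d p"
    using p(1,3) unfolding DS_coeffs_def by simp
  moreover have "(\<lambda>x y. of_real t * a x y + of_real (1 - t) * b x y) = DS_op d p"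
    unfolding p_def DS_op_convex_comb p(2,4) ..
  ultimately show ?thesis
    unfolding diag_symmetric_def by blast
qed

lemma op_convex_sep_DS_states: "op_convex (sep_DS_states d)"
  unfolding op_convex_def sep_DS_states_def
  using separable_convex_comb diag_symmetric_convex_comb by blast

lemma sum_ops_insert_split:
  fixes \<sigma> :: "nat \<Rightarrow> 'a \<Rightarrow> 'a \<Rightarrow> complex"
  assumes "finite F" "m \<notin> F" "w m + (\<Sum>j\<in>F. w j) = 1" "(\<Sum>j\<in>F. w j) \<noteq> 0"
  shows "(\<lambda>x y. \<Sum>j\<in>insert m F. of_real (w j) * \<sigma> j x y) =
    (\<lambda>x y. of_real (w m) * \<sigma> m x y +
       of_real (1 - w m) * (\<Sum>j\<in>F. of_real (w j / (\<Sum>i\<in>F. w i)) * \<sigma> j x y))"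
proof (intro ext)
  fix x y
  define W where "W = (\<Sum>i\<in>F. w i)"
  have "1 - w m = W"
    using assms(3) unfolding W_def by simp
  moreover have "W \<noteq> 0"
    using assms(4) unfolding W_def .
  ultimately have "of_real (1 - w m) * (\<Sum>j\<in>F. of_real (w j / (\<Sum>i\<in>F. w i)) * \<sigma> j x y) =
      (\<Sum>j\<in>F. of_real (w j) * \<sigma> j x y)"
    unfolding W_def[symmetric] by (simp add: sum_distrib_left mult.assoc)
  then show "(\<Sum>j\<in>insert m F. of_real (w j) * \<sigma> j x y) =
      of_real (w m) * \<sigma> m x y + of_real (1 - w m) * (\<Sum>j\<in>F. of_real (w j / (\<Sum>i\<in>F. w i)) * \<sigma> j x y)"
    using assms(1,2) by simp
qed

lemma op_convex_sum:
  fixes \<sigma> :: "nat \<Rightarrow> 'a \<Rightarrow> 'a \<Rightarrow> complex"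
  assumes "op_convex S" "finite M" "M \<noteq> {}" "\<forall>m\<in>M. 0 < w m \<and> \<sigma> m \<in> S" "(\<Sum>m\<in>M. w m) = 1"
  shows "(\<lambda>x y. \<Sum>m\<in>M. of_real (w m) * \<sigma> m x y) \<in> S"
  using assms(2-5)
proof (induction M arbitrary: w rule: finite_ne_induct)
  case (singleton m)
  then show ?case by simp
next
  case (insert m F)
  define W where "W = (\<Sum>j\<in>F. w j)"
  have "W > 0"
    unfolding W_def using insert.prems(1) insert.hyps(1,2) by (intro sum_pos) auto
  have "(\<Sum>j\<in>F. w j / W) = 1"
    using \<open>W > 0\<close> unfolding W_def by (simp flip: sum_divide_distrib)
  then have "(\<lambda>x y. \<Sum>j\<in>F. of_real (w j / W) * \<sigma> j x y) \<in> S"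
    using insert.prems(1) \<open>W > 0\<close> by (intro insert.IH) auto
  moreover have "0 \<le> w m" "w m \<le> 1"
    using insert.prems insert.hyps(1,3) \<open>W > 0\<close> unfolding W_def by auto
  ultimately have "(\<lambda>x y. of_real (w m) * \<sigma> m x y +
      of_real (1 - w m) * (\<Sum>j\<in>F. of_real (w j / W) * \<sigma> j x y)) \<in> S"
    using assms(1) insert.prems(1) unfolding op_convex_def by simp
  then show ?case
    using insert.prems(2) insert.hyps(1,3) \<open>W > 0\<close> unfolding W_def
    by (subst sum_ops_insert_split) auto
qed

lemma extremal_in_convex_sum:
  fixes \<sigma> :: "nat \<Rightarrow> 'a \<Rightarrow> 'a \<Rightarrow> complex"
  assumes "extremal_in S \<rho>" "op_convex S" "finite M" "m0 \<in> M"
    and "\<forall>m\<in>M. 0 < w m \<and> \<sigma> m \<in> S" "(\<Sum>m\<in>M. w m) = 1"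
    and "\<rho> = (\<lambda>x y. \<Sum>m\<in>M. of_real (w m) * \<sigma> m x y)"
  shows "\<sigma> m0 = \<rho>"
proof (cases "M = {m0}")
  case True
  then show ?thesis using assms(6,7) by simp
next
  case False
  define F where "F = M - {m0}"
  define W where "W = (\<Sum>j\<in>F. w j)"
  define \<tau> where "\<tau> = (\<lambda>x y. \<Sum>j\<in>F. of_real (w j / W) * \<sigma> j x y)"
  have F: "finite F" "F \<noteq> {}" "m0 \<notin> F" "M = insert m0 F"
    using assms(3,4) False unfolding F_def by auto
  have "W > 0"
    unfolding W_def using assms(5) F by (intro sum_pos) auto
  have "w m0 + W = 1"
    using assms(6) F unfolding W_def by simp
  have "\<tau> \<in> S"
    unfolding \<tau>_def using assms(2,5) F \<open>W > 0\<close>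
    by (intro op_convex_sum) (auto simp: W_def simp flip: sum_divide_distrib)
  have \<rho>_split: "\<rho> = (\<lambda>x y. of_real (w m0) * \<sigma> m0 x y + of_real (1 - w m0) * \<tau> x y)"
    unfolding assms(7) \<tau>_def W_def F(4)
    using F \<open>w m0 + W = 1\<close> \<open>W > 0\<close> unfolding W_def by (intro sum_ops_insert_split) auto
  moreover have "0 < w m0" "w m0 < 1" "\<sigma> m0 \<in> S"
    using assms(4,5) \<open>w m0 + W = 1\<close> \<open>W > 0\<close> by auto
  ultimately have "\<sigma> m0 = \<tau>"
    using assms(1) \<open>\<tau> \<in> S\<close> unfolding extremal_in_def by blast
  then show ?thesis
    using \<rho>_split by (simp add: algebra_simps flip: distrib_right of_real_add)
qed

section \<open>Separable diagonal symmetric states\<close>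

lemma Re_separable_entry:
  assumes "DS_op d p = (\<lambda>x y. \<Sum>m<n. of_real (q m) * tensor_op (A m) (B m) x y)"
  shows "Re (DS_op d p (k, l) (r, s)) = (\<Sum>m<n. q m * Re (A m k r * B m l s))"
  unfolding assms by (simp add: tensor_op_def Re_sum)

lemma separable_components_diag:
  fixes d :: nat
  assumes "\<forall>m<n. 0 \<le> q m \<and> density_on {..<d} (A m) \<and> density_on {..<d} (B m)" "m < n" "k < d"
  shows "Im (A m k k) = 0" "Im (B m k k) = 0" "0 \<le> Re (A m k k)" "0 \<le> Re (B m k k)"
  using assms density_on_diag[of "{..<d}" "A m" k] density_on_diag[of "{..<d}" "B m" k] by auto

lemma separable_Re_diag_entry:
  assumes dens: "\<forall>m<n. 0 \<le> q m \<and> density_on {..<d} (A m) \<and> density_on {..<d} (B m)"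
    and decomp: "DS_op d p = (\<lambda>x y. \<Sum>m<n. of_real (q m) * tensor_op (A m) (B m) x y)"
    and "k < d" "l < d"
  shows "Re (DS_op d p (k, l) (k, l)) = (\<Sum>m<n. q m * (Re (A m k k) * Re (B m l l)))"
  unfolding Re_separable_entry[OF decomp]
  using separable_components_diag(1,2)[OF dens] assms(3,4) by (intro sum.cong) auto

lemma separable_DS_offdiag_coeff:
  assumes dens: "\<forall>m<n. 0 \<le> q m \<and> density_on {..<d} (A m) \<and> density_on {..<d} (B m)"
    and decomp: "DS_op d p = (\<lambda>x y. \<Sum>m<n. of_real (q m) * tensor_op (A m) (B m) x y)"
    and "i < j" "j < d"
  shows "(\<Sum>m<n. q m * (sqrt (Re (A m i i) * Re (B m i i)) * sqrt (Re (A m j j) * Re (B m j j))))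
    = p i j / 2"
proof -
  define a b where "a m k = Re (A m k k)" and "b m k = Re (B m k k)" for m k
  define g where "g m = sqrt (a m i * b m i) * sqrt (a m j * b m j)" for m
  have "i < d" using assms(3,4) by simp
  \<comment> \<open>The entries at \<open>(ij, ij)\<close>, \<open>(ji, ji)\<close> and \<open>(ij, ji)\<close> all equal \<open>p i j / 2\<close>; Cauchy-Schwarz
      and AM-GM squeeze \<open>\<Sum> q g\<close> between the last one and the mean of the first two.\<close>
  have "p i j / 2 = Re (DS_op d p (i, j) (j, i))"
    using assms(3,4) by (simp add: DS_op_entry insert_commute)
  also have "\<dots> = (\<Sum>m<n. q m * Re (A m i j * B m j i))"
    by (rule Re_separable_entry[OF decomp])
  also have "\<dots> \<le> (\<Sum>m<n. q m * g m)"
    unfolding g_def a_def b_def using dens \<open>i < d\<close> \<open>j < d\<close>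
    by (intro sum_mono mult_left_mono density_on_product_offdiag_bound) auto
  finally have lower: "p i j / 2 \<le> (\<Sum>m<n. q m * g m)" .
  have "(\<Sum>m<n. q m * g m) \<le> (\<Sum>m<n. q m * ((a m i * b m j + a m j * b m i) / 2))"
  proof (intro sum_mono mult_left_mono)
    fix m assume "m \<in> {..<n}"
    then have "0 \<le> a m i * b m j" "0 \<le> a m j * b m i"
      using separable_components_diag(3,4)[OF dens] \<open>i < d\<close> \<open>j < d\<close> unfolding a_def b_def by simp_all
    then have "sqrt ((a m i * b m j) * (a m j * b m i)) \<le> (a m i * b m j + a m j * b m i) / 2"
      by (rule arith_geo_mean_sqrt)
    then show "g m \<le> (a m i * b m j + a m j * b m i) / 2"
      unfolding g_def by (simp add: ac_simps flip: real_sqrt_mult)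
    show "0 \<le> q m"
      using dens \<open>m \<in> {..<n}\<close> by simp
  qed
  also have "\<dots> = p i j / 2"
    using separable_Re_diag_entry[OF dens decomp, of i j] separable_Re_diag_entry[OF dens decomp, of j i]
      assms(3,4)
    by (simp add: DS_op_entry insert_commute a_def b_def sum.distrib sum_divide_distrib[symmetric]
        add_divide_distrib algebra_simps)
  finally show ?thesis
    using lower unfolding g_def a_def b_def by linarith
qed

lemma separable_DS_coeffs_eq:
  assumes dens: "\<forall>m<n. 0 \<le> q m \<and> density_on {..<d} (A m) \<and> density_on {..<d} (B m)"
    and decomp: "DS_op d p = (\<lambda>x y. \<Sum>m<n. of_real (q m) * tensor_op (A m) (B m) x y)"
    and "(i, j) \<in> DS_pairs d"
  shows "p i j = (\<Sum>m<n. q m * DS_product_coeffs (\<lambda>k. sqrt (Re (A m k k) * Re (B m k k))) i j)"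
proof -
  have "i \<le> j" "j < d"
    using assms(3) by (auto simp: DS_pairs_def)
  show ?thesis
  proof (cases "i = j")
    case True
    have "p i i = Re (DS_op d p (i, i) (i, i))"
      using \<open>j < d\<close> True by (simp add: DS_op_entry)
    also have "\<dots> = (\<Sum>m<n. q m * (Re (A m i i) * Re (B m i i)))"
      using \<open>j < d\<close> True by (intro separable_Re_diag_entry[OF dens decomp]) simp_all
    also have "\<dots> = (\<Sum>m<n. q m * (sqrt (Re (A m i i) * Re (B m i i)))\<^sup>2)"
      using separable_components_diag(3,4)[OF dens] \<open>j < d\<close> True by (intro sum.cong) auto
    finally show ?thesis
      using True by (simp add: DS_product_coeffs_def)
  next
    case False
    then show ?thesis
      using separable_DS_offdiag_coeff[OF dens decomp, of i j] \<open>i \<le> j\<close> \<open>j < d\<close>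
      by (simp add: DS_product_coeffs_def sum_distrib_left algebra_simps)
  qed
qed

lemma sum_product_mixture_weights:
  fixes n :: nat
  assumes "DS_coeffs d p"
    and "\<And>i j. (i, j) \<in> DS_pairs d \<Longrightarrow> p i j = (\<Sum>m<n. q m * DS_product_coeffs (r m) i j)"
  shows "(\<Sum>m<n. q m * (\<Sum>k<d. r m k)\<^sup>2) = 1"
proof -
  have "(\<Sum>m<n. q m * (\<Sum>k<d. r m k)\<^sup>2) =
      (\<Sum>(i, j)\<in>DS_pairs d. \<Sum>m<n. q m * DS_product_coeffs (r m) i j)"
    unfolding sum_DS_product_coeffs[symmetric] sum_distrib_left
    by (subst sum.swap) (simp add: case_prod_beta)
  also have "\<dots> = 1"
    using assms unfolding DS_coeffs_def by (simp add: case_prod_beta)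
  finally show ?thesis .
qed

lemma DS_op_product_mixture:
  fixes n :: nat
  assumes "DS_coeffs d p"
    and q: "\<forall>m<n. 0 \<le> q m" and r: "\<forall>m<n. \<forall>k<d. 0 \<le> r m k"
    and p: "\<And>i j. (i, j) \<in> DS_pairs d \<Longrightarrow> p i j = (\<Sum>m<n. q m * DS_product_coeffs (r m) i j)"
  obtains M :: "nat set" and w y where "finite M" "(\<Sum>m\<in>M. w m) = 1"
    "\<forall>m\<in>M. 0 < w m \<and> (\<forall>k<d. 0 \<le> y m k) \<and> (\<Sum>k<d. y m k) = 1"
    "DS_op d p = (\<lambda>x x'. \<Sum>m\<in>M. of_real (w m) * DS_op d (DS_product_coeffs (y m)) x x')"
proof -
  define s where "s m = (\<Sum>k<d. r m k)" for m
  define w where "w m = q m * (s m)\<^sup>2" for m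
  define y where "y m k = r m k / s m" for m k
  define M where "M = {m. m < n \<and> 0 < w m}"
  have "M \<subseteq> {..<n}"
    unfolding M_def by auto
  then have "finite M"
    by (rule finite_subset) simp
  have s_nonneg: "0 \<le> s m" if "m < n" for m
    unfolding s_def using r that by (intro sum_nonneg) simp
  have w_zero: "q m = 0 \<or> s m = 0" if "m < n" "m \<notin> M" for m
    using that q s_nonneg[of m] unfolding M_def w_def by (auto simp: zero_less_mult_iff order.order_iff_strict)
  have "(\<Sum>m\<in>M. w m) = (\<Sum>m<n. w m)"
    using \<open>M \<subseteq> {..<n}\<close> w_zero unfolding w_def by (intro sum.mono_neutral_left) auto
  also have "\<dots> = 1"
    unfolding w_def s_def by (rule sum_product_mixture_weights[OF assms(1) p])
  finally have sum_w: "(\<Sum>m\<in>M. w m) = 1" .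
  have weights: "\<forall>m\<in>M. 0 < w m \<and> (\<forall>k<d. 0 \<le> y m k) \<and> (\<Sum>k<d. y m k) = 1"
  proof
    fix m assume "m \<in> M"
    have "m < n" "0 < w m" "0 < s m"
      using \<open>m \<in> M\<close> s_nonneg unfolding M_def w_def by (auto simp: zero_less_mult_iff order.order_iff_strict)
    then show "0 < w m \<and> (\<forall>k<d. 0 \<le> y m k) \<and> (\<Sum>k<d. y m k) = 1"
      using r unfolding y_def s_def by (simp flip: sum_divide_distrib)
  qed
  have "DS_op d p = DS_op d (\<lambda>i j. \<Sum>m\<in>M. w m * DS_product_coeffs (y m) i j)"
  proof (rule DS_op_cong)
    fix i j assume ij: "(i, j) \<in> DS_pairs d"
    have "q m * DS_product_coeffs (r m) i j = 0" if "m < n" "m \<notin> M" for m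
    proof -
      have "r m i = 0 \<and> r m j = 0" if "s m = 0"
        using that \<open>m < n\<close> ij r unfolding s_def DS_pairs_def
        by (subst (asm) sum_nonneg_eq_0_iff) auto
      then show ?thesis
        using w_zero[OF that] by (auto simp: DS_product_coeffs_def)
    qed
    moreover have "w m * DS_product_coeffs (y m) i j = q m * DS_product_coeffs (r m) i j" if "m \<in> M" for m
    proof -
      have "s m \<noteq> 0"
        using that unfolding M_def w_def by auto
      then have "r m = (\<lambda>k. s m * y m k)"
        unfolding y_def by auto
      then show ?thesis
        unfolding w_def by (simp add: DS_product_coeffs_scale)
    qed
    ultimately show "p i j = (\<Sum>m\<in>M. w m * DS_product_coeffs (y m) i j)"
      using p[OF ij] \<open>M \<subseteq> {..<n}\<close> by (simp add: sum.mono_neutral_right[of "{..<n}" M])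
  qed
  then have "DS_op d p = (\<lambda>x x'. \<Sum>m\<in>M. of_real (w m) * DS_op d (DS_product_coeffs (y m)) x x')"
    by (simp only: DS_op_sum[OF \<open>finite M\<close>])
  then show ?thesis
    by (rule that[OF \<open>finite M\<close> sum_w weights])
qed

lemma extremal_DS_coeffs_product:
  fixes n :: nat
  assumes extremal: "extremal_in (sep_DS_states d) (DS_op d p)" and "DS_coeffs d p"
    and "\<forall>m<n. 0 \<le> q m" "\<forall>m<n. \<forall>k<d. 0 \<le> r m k"
    and "\<And>i j. (i, j) \<in> DS_pairs d \<Longrightarrow> p i j = (\<Sum>m<n. q m * DS_product_coeffs (r m) i j)"
  obtains u where "\<forall>k<d. 0 \<le> u k" "\<forall>(i, j)\<in>DS_pairs d. p i j = DS_product_coeffs u i j"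
proof -
  obtain M :: "nat set" and w y where M: "finite M" "(\<Sum>m\<in>M. w m) = 1"
      "\<forall>m\<in>M. 0 < w m \<and> (\<forall>k<d. 0 \<le> y m k) \<and> (\<Sum>k<d. y m k) = 1"
    and decomp: "DS_op d p = (\<lambda>x x'. \<Sum>m\<in>M. of_real (w m) * DS_op d (DS_product_coeffs (y m)) x x')"
    by (rule DS_op_product_mixture[OF assms(2-5)])
  obtain m0 where "m0 \<in> M"
    using M(2) by fastforce
  have eq: "DS_op d (DS_product_coeffs (y m0)) = DS_op d p"
    by (rule extremal_in_convex_sum[OF extremal op_convex_sep_DS_states M(1) \<open>m0 \<in> M\<close> _ M(2) decomp])
      (use M(3) in \<open>auto intro: DS_product_in_sep_DS_states\<close>)
  show ?thesis
  proof (rule that[of "y m0"])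
    show "\<forall>k<d. 0 \<le> y m0 k"
      using M(3) \<open>m0 \<in> M\<close> by blast
    show "\<forall>(i, j)\<in>DS_pairs d. p i j = DS_product_coeffs (y m0) i j"
      using DS_op_eq_imp_coeffs_eq[OF eq[symmetric]] by blast
  qed
qed

theorem corollary1:
  fixes d :: nat and p :: "nat \<Rightarrow> nat \<Rightarrow> real"
  assumes "d \<ge> 2"
    and "DS_coeffs d p"
    and "extremal_in (sep_DS_states d) (DS_op d p)"
  shows "\<forall>i j. i < j \<and> j < d \<longrightarrow> p i j = 2 * sqrt (p i i * p j j)"
proof -
  have "separable d (DS_op d p)"
    using assms(3) unfolding extremal_in_def sep_DS_states_def by blast
  then obtain n :: nat and q A B where
    dens: "\<forall>m<n. 0 \<le> q m \<and> density_on {..<d} (A m) \<and> density_on {..<d} (B m)" and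
    decomp: "DS_op d p = (\<lambda>x y. \<Sum>m<n. of_real (q m) * tensor_op (A m) (B m) x y)"
    unfolding separable_def by blast
  have "\<forall>m<n. 0 \<le> q m" "\<forall>m<n. \<forall>k<d. 0 \<le> sqrt (Re (A m k k) * Re (B m k k))"
    using dens separable_components_diag(3,4)[OF dens] by simp_all
  then obtain u where "\<forall>k<d. 0 \<le> u k" "\<forall>(i, j)\<in>DS_pairs d. p i j = DS_product_coeffs u i j"
    by (rule extremal_DS_coeffs_product[OF assms(3,2) _ _ separable_DS_coeffs_eq[OF dens decomp]])
  then show ?thesis
    using DS_product_coeffs_offdiag by (simp add: DS_pairs_def)
qed

end
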